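(* Let $f\mathrm{Vect}^\times_{\mathbb C}$ be the topological groupoid of finite dimensional complex vector spaces and invertible linear maps, and let $(f\mathrm{Vect}^\times_{\mathbb C})^{\beta\delta}$ be the topological groupoid of finite dimensional complex vector spaces equipped with a nondegenerate hermitian form (of any signature) and isometries, both with the usual topology on morphism spaces; let $\phi\colon(f\mathrm{Vect}^\times_{\mathbb C})^{\beta\delta}\to f\mathrm{Vect}^\times_{\mathbb C}$ be the forgetful functor. Suppose $\rho\colon f\mathrm{Vect}^\times_{\mathbb C}\to(f\mathrm{Vect}^\times_{\mathbb C})^{\beta\delta}$ is a functor with $\phi\circ\rho$ homotopic to the identity functor and such that $\rho$ induces homotopy equivalences on morphism spaces. Then for every finite dimensional complex vector space $V$ the hermitian form on $\rho(V)$ is definite. *)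

theory Defs
  imports "HOL-Analysis.Analysis" "Jordan_Normal_Form.Schur_Decomposition"
begin

text \<open>Skeletal model of the topological groupoid fVect^x_C: objects are dimensions n
  (standing for C^n); all morphisms are automorphisms, i.e. elements of GL_n(C),
  represented as invertible n x n complex matrices.\<close>

definition GLm :: "nat \<Rightarrow> complex mat set" where
  "GLm n = {A \<in> carrier_mat n n. invertible_mat A}"

text \<open>The usual (Euclidean) topology on n x n complex matrices, pulled back from the
  entry function (entries outside the n x n range are set to 0) with the product topology.\<close>

definition mat_top :: "nat \<Rightarrow> complex mat topology" where
  "mat_top n = pullback_topology (carrier_mat n n)
      (\<lambda>A (ij::nat \<times> nat). if fst ij < n \<and> snd ij < n then A $$ ij else 0) euclidean"

text \<open>Objects of the hermitian groupoid: (n, H) with H a nondegenerate hermitian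
  n x n matrix (the form (v,w) |-> v^* H w on C^n, of any signature).\<close>

definition herm_obj :: "nat \<times> complex mat \<Rightarrow> bool" where
  "herm_obj X \<longleftrightarrow> snd X \<in> carrier_mat (fst X) (fst X) \<and> mat_adjoint (snd X) = snd X
      \<and> det (snd X) \<noteq> 0"

definition Isom :: "nat \<times> complex mat \<Rightarrow> complex mat set" where
  "Isom X = {A \<in> carrier_mat (fst X) (fst X). invertible_mat A
      \<and> mat_adjoint A * snd X * A = snd X}"

definition definite_obj :: "nat \<times> complex mat \<Rightarrow> bool" where
  "definite_obj X \<longleftrightarrow>
     (\<forall>v::nat \<Rightarrow> complex. (\<exists>i<fst X. v i \<noteq> 0) \<longrightarrow>
        0 < Re (\<Sum>i<fst X. \<Sum>j<fst X. cnj (v i) * snd X $$ (i,j) * v j))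
   \<or> (\<forall>v::nat \<Rightarrow> complex. (\<exists>i<fst X. v i \<noteq> 0) \<longrightarrow>
        Re (\<Sum>i<fst X. \<Sum>j<fst X. cnj (v i) * snd X $$ (i,j) * v j) < 0)"

text \<open>Endofunctors of the skeletal fVect^x_C (morphism part; objects fixed).\<close>

definition GL_functor :: "(nat \<Rightarrow> complex mat \<Rightarrow> complex mat) \<Rightarrow> bool" where
  "GL_functor F \<longleftrightarrow> (\<forall>n.
     (\<forall>A\<in>GLm n. F n A \<in> GLm n) \<and>
     (\<forall>A\<in>GLm n. \<forall>B\<in>GLm n. F n (A * B) = F n A * F n B) \<and>
     F n (1\<^sub>m n) = 1\<^sub>m n)"

definition herm_functor :: "(nat \<Rightarrow> nat \<times> complex mat) \<Rightarrow> (nat \<Rightarrow> complex mat \<Rightarrow> complex mat) \<Rightarrow> bool" where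
  "herm_functor ro rm \<longleftrightarrow> (\<forall>n.
     herm_obj (ro n) \<and>
     (\<forall>A\<in>GLm n. rm n A \<in> Isom (ro n)) \<and>
     (\<forall>A\<in>GLm n. \<forall>B\<in>GLm n. rm n (A * B) = rm n A * rm n B) \<and>
     rm n (1\<^sub>m n) = 1\<^sub>m (fst (ro n)))"

text \<open>phi o rho is homotopic to the identity functor: a homotopy of functors
  C x [0,1] -> C (objects are discrete, so it is constant on objects), i.e. a family of
  functors H t, jointly continuous in (t, morphism), with H 0 = phi o rho and H 1 = id.\<close>

definition homotopic_to_id :: "(nat \<Rightarrow> nat \<times> complex mat) \<Rightarrow> (nat \<Rightarrow> complex mat \<Rightarrow> complex mat) \<Rightarrow> bool" where
  "homotopic_to_id ro rm \<longleftrightarrow> (\<forall>n. fst (ro n) = n) \<and>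
     (\<exists>H :: real \<Rightarrow> nat \<Rightarrow> complex mat \<Rightarrow> complex mat.
        (\<forall>t\<in>{0..1}. GL_functor (H t)) \<and>
        (\<forall>n. \<forall>A\<in>GLm n. H 0 n A = rm n A \<and> H 1 n A = A) \<and>
        (\<forall>n. continuous_map (prod_topology (top_of_set {0..1}) (subtopology (mat_top n) (GLm n)))
                (mat_top n) (\<lambda>(t, A). H t n A)))"

definition homotopy_equivalence_map :: "'a topology \<Rightarrow> 'b topology \<Rightarrow> ('a \<Rightarrow> 'b) \<Rightarrow> bool" where
  "homotopy_equivalence_map X Y f \<longleftrightarrow> continuous_map X Y f \<and>
     (\<exists>g. continuous_map Y X g \<and>
          homotopic_with (\<lambda>x. True) X X (g \<circ> f) id \<and>
          homotopic_with (\<lambda>x. True) Y Y (f \<circ> g) id)"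

end

theory Submission
  imports Defs
begin

(*
  Let rho(C^n) = (C^n, H).  The reflections r_i in the coordinate hyperplanes are commuting
  involutions of GL_n, and the transposition t_i of the coordinates 0 and i conjugates r_0 into r_i.
  The trace of an involution takes only the values n - 2k, so along the homotopy from phi o rho to
  the identity it is constant: rho preserves traces of involutions.  Hence the projections
  P_i = (1 - rho(r_i)) / 2 onto the (-1)-eigenspaces are idempotents of trace 1, with traces of
  pairwise products 0; thus they are of rank one and mutually orthogonal.  Writing P_0 = x y,
  the vectors rho(t_i) x form a basis, H-orthogonal because P_0 is H-self-adjoint, in which every
  basis vector has H-norm H(x, x), as rho(t_i) is an H-isometry.  Nondegeneracy forces
  H(x, x) <> 0, so H is definite.
*)

section \<open>Adjoints, traces and rank-one matrices\<close>

lemma dim_mat_adjoint [simp]: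
  "dim_row (mat_adjoint A) = dim_col A" "dim_col (mat_adjoint A) = dim_row A"
  unfolding mat_adjoint_def by simp_all

lemma index_mat_adjoint [simp]:
  "i < dim_col A \<Longrightarrow> j < dim_row A \<Longrightarrow> mat_adjoint A $$ (i, j) = conjugate (A $$ (j, i))"
  unfolding mat_adjoint_def by (subst mat_of_rows_index) auto

lemma mat_adjoint_carrier [simp]: "A \<in> carrier_mat n m \<Longrightarrow> mat_adjoint A \<in> carrier_mat m n"
  unfolding carrier_mat_def by simp

lemma mat_adjoint_mult:
  fixes A B :: "'a :: conjugatable_field mat"
  assumes "A \<in> carrier_mat n m" "B \<in> carrier_mat m k"
  shows "mat_adjoint (A * B) = mat_adjoint B * mat_adjoint A"
  using assms
  by (intro eq_matI) (auto simp: scalar_prod_def sum_conjugate conjugate_dist_mul mult.commute)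

lemma mat_adjoint_adjoint [simp]: "mat_adjoint (mat_adjoint A) = A"
  by (intro eq_matI) auto

lemma mat_adjoint_one [simp]: "mat_adjoint (1\<^sub>m n :: complex mat) = 1\<^sub>m n"
  by (intro eq_matI) auto

lemma mat_adjoint_minus:
  "A \<in> carrier_mat n m \<Longrightarrow> B \<in> carrier_mat n m \<Longrightarrow>
   mat_adjoint (A - B) = mat_adjoint A - mat_adjoint (B :: complex mat)"
  by (intro eq_matI) auto

lemma mat_adjoint_smult:
  "mat_adjoint (c \<cdot>\<^sub>m A) = conjugate c \<cdot>\<^sub>m mat_adjoint (A :: 'a :: conjugatable_field mat)"
  by (intro eq_matI) (auto simp: conjugate_dist_mul)

definition mat_trace :: "'a :: comm_monoid_add mat \<Rightarrow> 'a" where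
  "mat_trace A = (\<Sum>i<dim_row A. A $$ (i, i))"

lemma mat_trace_mult_comm:
  fixes A B :: "'a :: comm_semiring_0 mat"
  assumes "A \<in> carrier_mat n m" "B \<in> carrier_mat m n"
  shows "mat_trace (A * B) = mat_trace (B * A)"
proof -
  have "mat_trace (A * B) = (\<Sum>i<n. \<Sum>k<m. A $$ (i, k) * B $$ (k, i))"
    using assms by (simp add: mat_trace_def scalar_prod_def atLeast0LessThan)
  also have "\<dots> = (\<Sum>k<m. \<Sum>i<n. B $$ (k, i) * A $$ (i, k))"
    by (subst sum.swap) (simp add: mult.commute)
  also have "\<dots> = mat_trace (B * A)"
    using assms by (simp add: mat_trace_def scalar_prod_def atLeast0LessThan)
  finally show ?thesis .
qed

lemma mat_trace_minus:
  "A \<in> carrier_mat n n \<Longrightarrow> B \<in> carrier_mat n n \<Longrightarrow>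
   mat_trace (A - B) = mat_trace A - mat_trace (B :: 'a :: ab_group_add mat)"
  by (simp add: mat_trace_def sum_subtractf)

lemma mat_trace_smult:
  "A \<in> carrier_mat n n \<Longrightarrow> mat_trace (c \<cdot>\<^sub>m A) = c * mat_trace (A :: 'a :: comm_semiring_0 mat)"
  by (simp add: mat_trace_def sum_distrib_left)

lemma mat_trace_one [simp]: "mat_trace (1\<^sub>m n :: 'a :: comm_semiring_1 mat) = of_nat n"
  by (simp add: mat_trace_def)

lemma mat_trace_similar:
  fixes A B :: "'a :: comm_semiring_1 mat"
  assumes "similar_mat_wit A B P Q"
  shows "mat_trace A = mat_trace B"
proof -
  obtain n where wit: "A \<in> carrier_mat n n" "B \<in> carrier_mat n n" "P \<in> carrier_mat n n"
    "Q \<in> carrier_mat n n" "Q * P = 1\<^sub>m n" "A = P * B * Q"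
    using similar_mat_witD[OF refl assms] by blast
  have "mat_trace A = mat_trace (P * (B * Q))" using wit by simp
  also have "\<dots> = mat_trace (B * Q * P)" using wit by (subst mat_trace_mult_comm) auto
  also have "\<dots> = mat_trace B" using wit by simp
  finally show ?thesis .
qed

lemma one_minus_mult_one_minus:
  fixes A B :: "'a :: comm_ring_1 mat"
  assumes A: "A \<in> carrier_mat n n" and B: "B \<in> carrier_mat n n"
  shows "(1\<^sub>m n - A) * (1\<^sub>m n - B) = 1\<^sub>m n - A - B + A * B"
proof -
  have "(1\<^sub>m n - A) * (1\<^sub>m n - B) = (1\<^sub>m n - A) * 1\<^sub>m n - (1\<^sub>m n - A) * B"
    using A B by (intro mult_minus_distrib_mat) (auto intro: minus_carrier_mat)
  also have "\<dots> = (1\<^sub>m n - A) - (B - A * B)"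
    using A B by (simp add: minus_carrier_mat minus_mult_distrib_mat[OF one_carrier_mat A B])
  also have "\<dots> = 1\<^sub>m n - A - B + A * B"
    using A B by (intro eq_matI) auto
  finally show ?thesis .
qed

lemma mult_one_by_one_mat:
  fixes A C :: "'a :: comm_semiring_0 mat"
  shows "A \<in> carrier_mat n 1 \<Longrightarrow> C \<in> carrier_mat 1 1 \<Longrightarrow> A * C = C $$ (0, 0) \<cdot>\<^sub>m A"
  by (intro eq_matI) (auto simp: scalar_prod_def mult.commute)

lemma mult_involution_sandwich:
  fixes x y S :: "'a :: semiring_1 mat"
  assumes y: "y \<in> carrier_mat m n" and S: "S \<in> carrier_mat n n" "S * S = 1\<^sub>m n"
    and x: "x \<in> carrier_mat n k"
  shows "(y * S) * (S * x) = y * x"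
  by (simp only: assoc_mult_mat[OF y S(1) mult_carrier_mat[OF S(1) x]]
      assoc_mult_mat[OF S(1) S(1) x, symmetric] S(2) left_mult_one_mat[OF x])

lemma rank_one_trace:
  fixes x y :: "'a :: comm_ring_1 mat"
  assumes xy: "x \<in> carrier_mat n 1" "y \<in> carrier_mat 1 n" and tr: "mat_trace (x * y) = 1"
  shows "y * x = 1\<^sub>m 1"
proof (rule eq_matI)
  have "(y * x) $$ (0, 0) = mat_trace (y * x)" using xy by (simp add: mat_trace_def)
  also have "\<dots> = 1" using mat_trace_mult_comm[OF xy] tr by simp
  finally show "(y * x) $$ (i, j) = 1\<^sub>m 1 $$ (i, j)" if "i < dim_row (1\<^sub>m 1)" "j < dim_col (1\<^sub>m 1)" for i j
    using that by simp
qed (use xy in simp_all)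

lemma rank_one_mult_eq_zero:
  fixes u w u' w' :: "'a :: comm_ring_1 mat"
  assumes u: "u \<in> carrier_mat n 1" "u' \<in> carrier_mat n 1" and w: "w \<in> carrier_mat 1 n" "w' \<in> carrier_mat 1 n"
    and wu: "w * u = 1\<^sub>m 1" "w' * u' = 1\<^sub>m 1" and zero: "(u * w) * (u' * w') = 0\<^sub>m n n"
  shows "w * u' = 0\<^sub>m 1 1"
proof -
  have "(u * w) * (u' * w') * u' = (u * w) * (u' * (w' * u'))"
    using assoc_mult_mat[OF mult_carrier_mat[OF u(1) w(1)] mult_carrier_mat[OF u(2) w(2)] u(2)]
      assoc_mult_mat[OF u(2) w(2) u(2)] by simp
  also have "\<dots> = u * (w * u')" using u w wu by simp
  finally have "w * ((u * w) * (u' * w') * u') = (w * u) * (w * u')"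
    using assoc_mult_mat[OF w(1) u(1) mult_carrier_mat[OF w(1) u(2)]] by simp
  hence "w * u' = w * ((u * w) * (u' * w') * u')" using u w wu by simp
  thus ?thesis unfolding zero using u w by simp
qed

lemma idempotent_mult_comm:
  assumes "P \<in> carrier_mat n n" "Q \<in> carrier_mat n n" "P * P = P" "Q * Q = Q" "P * Q = Q * P"
  shows "(P * Q) * (P * Q) = P * Q"
proof -
  have "(P * Q) * (P * Q) = P * (Q * P) * Q"
    using assms(1,2) by (simp add: assoc_mult_mat[of _ n n _ n _ n])
  also have "\<dots> = (P * P) * (Q * Q)"
    using assms(1,2) by (simp add: assoc_mult_mat[of _ n n _ n _ n] flip: assms(5))
  finally show ?thesis using assms(3,4) by simp
qed

lemma involution_GLm:
  assumes "A \<in> carrier_mat n n" "A * A = 1\<^sub>m n"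
  shows "A \<in> GLm n"
  using assms unfolding GLm_def invertible_mat_def inverts_mat_def by auto

lemma mult_involutions_GLm:
  assumes S: "S \<in> carrier_mat n n" "S * S = 1\<^sub>m n" and D: "D \<in> carrier_mat n n" "D * D = 1\<^sub>m n"
  shows "S * D \<in> GLm n"
proof -
  have "S * D * (D * S) = S * (D * D) * S" "D * S * (S * D) = D * (S * S) * D"
    using S(1) D(1) by (simp_all add: assoc_mult_mat[of _ n n _ n _ n])
  hence "S * D * (D * S) = 1\<^sub>m n" "D * S * (S * D) = 1\<^sub>m n"
    using S D by (simp_all del: assoc_mult_mat)
  thus ?thesis
    using S D unfolding GLm_def invertible_mat_def inverts_mat_def by (auto intro!: exI[of _ "D * S"])
qed

section \<open>Idempotents\<close>

lemma upper_triangular_mult_diag: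
  fixes A B :: "'a :: semiring_0 mat"
  assumes "A \<in> carrier_mat n n" "B \<in> carrier_mat n n" "upper_triangular A" "upper_triangular B"
    and "i < n"
  shows "(A * B) $$ (i, i) = A $$ (i, i) * B $$ (i, i)"
proof -
  have "(A * B) $$ (i, i) = (\<Sum>l\<in>{0..<n}. A $$ (i, l) * B $$ (l, i))"
    using assms by (simp add: scalar_prod_def)
  also have "\<dots> = A $$ (i, i) * B $$ (i, i) + (\<Sum>l\<in>{0..<n} - {i}. A $$ (i, l) * B $$ (l, i))"
    using assms(5) by (subst sum.remove[of _ i]) auto
  also have "(\<Sum>l\<in>{0..<n} - {i}. A $$ (i, l) * B $$ (l, i)) = 0"
  proof (intro sum.neutral ballI)
    fix l assume "l \<in> {0..<n} - {i}"
    then consider "l < i" | "i < l" "l < n" by force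
    thus "A $$ (i, l) * B $$ (l, i) = 0"
      by cases (use assms in \<open>auto simp: upper_triangularD\<close>)
  qed
  finally show ?thesis by simp
qed

lemma upper_triangular_idempotent_diag:
  fixes B :: "'a :: idom mat"
  assumes B: "B \<in> carrier_mat n n" "upper_triangular B" "B * B = B" and i: "i < n"
  shows "B $$ (i, i) = 0 \<or> B $$ (i, i) = 1"
proof -
  have "B $$ (i, i) * B $$ (i, i) = B $$ (i, i)"
    using upper_triangular_mult_diag[OF B(1,1,2,2) i] B(3) by simp
  thus ?thesis by (metis mult_cancel_left mult.right_neutral)
qed

(* By induction on j - i: (B * B) $$ (i, j) only involves entries strictly closer to the diagonal. *)
lemma upper_triangular_idempotent_zero:
  fixes B :: "'a :: semiring_0 mat"
  assumes B: "B \<in> carrier_mat n n" "upper_triangular B" "B * B = B"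
    and diag: "\<And>l. i \<le> l \<Longrightarrow> l \<le> j \<Longrightarrow> B $$ (l, l) = 0" and "i \<le> j" "j < n"
  shows "B $$ (i, j) = 0"
  using diag assms(5,6)
proof (induction "j - i" arbitrary: i j rule: less_induct)
  case less
  have "B $$ (i, j) = (B * B) $$ (i, j)" using B(3) by simp
  also have "\<dots> = (\<Sum>l\<in>{0..<n}. B $$ (i, l) * B $$ (l, j))"
    using B(1) less.prems(2,3) by (simp add: scalar_prod_def)
  also have "\<dots> = 0"
  proof (intro sum.neutral ballI)
    fix l assume l: "l \<in> {0..<n}"
    consider "l < i" | "j < l" | "l = i" | "l = j" | "i < l" "l < j" by linarith
    thus "B $$ (i, l) * B $$ (l, j) = 0"
    proof cases
      case 1
      thus ?thesis using B less.prems by (simp add: upper_triangularD)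
    next
      case 2
      thus ?thesis using B l by (simp add: upper_triangularD)
    next
      case 5
      thus ?thesis using less.hyps[of l i] less.prems by simp
    qed (use less.prems in simp_all)
  qed
  finally show ?case .
qed

lemma upper_triangular_idempotent_rank_one:
  fixes B :: "'a :: semiring_0 mat"
  assumes B: "B \<in> carrier_mat n n" "upper_triangular B" "B * B = B"
    and diag: "\<And>i. i < n \<Longrightarrow> i \<noteq> k \<Longrightarrow> B $$ (i, i) = 0" and k: "k < n"
  shows "B = mat n 1 (\<lambda>(i, _). B $$ (i, k)) * mat 1 n (\<lambda>(_, j). B $$ (k, j))"
proof -
  have support: "i \<le> k \<and> k \<le> j" if "i < n" "j < n" "B $$ (i, j) \<noteq> 0" for i j
  proof (rule ccontr)
    assume "\<not> (i \<le> k \<and> k \<le> j)"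
    hence "B $$ (i, j) = 0"
      using upper_triangular_idempotent_zero[OF B, of i j] diag that(1,2)
        upper_triangularD[OF B(2), of j i] carrier_matD[OF B(1)]
      by (cases "i \<le> j") auto
    with that(3) show False ..
  qed
  show ?thesis
  proof (rule eq_matI)
    fix i j
    assume "i < dim_row (mat n 1 (\<lambda>(i, _). B $$ (i, k)) * mat 1 n (\<lambda>(_, j). B $$ (k, j)))"
      "j < dim_col (mat n 1 (\<lambda>(i, _). B $$ (i, k)) * mat 1 n (\<lambda>(_, j). B $$ (k, j)))"
    hence ij: "i < n" "j < n" by simp_all
    have "B $$ (i, j) = (B * B) $$ (i, j)" using B(3) by simp
    also have "\<dots> = (\<Sum>l\<in>{0..<n}. B $$ (i, l) * B $$ (l, j))"
      using B(1) ij by (simp add: scalar_prod_def)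
    also have "\<dots> = (\<Sum>l\<in>{k}. B $$ (i, l) * B $$ (l, j))"
    proof (intro sum.mono_neutral_right ballI)
      fix l assume l: "l \<in> {0..<n} - {k}"
      show "B $$ (i, l) * B $$ (l, j) = 0"
      proof (cases "B $$ (i, l) = 0")
        case False
        hence "k < l" using support[of i l] ij l by force
        hence "B $$ (l, j) = 0" using support[of l j] ij l by force
        thus ?thesis by simp
      qed simp
    qed (use k in auto)
    also have "\<dots> = (mat n 1 (\<lambda>(i, _). B $$ (i, k)) * mat 1 n (\<lambda>(_, j). B $$ (k, j))) $$ (i, j)"
      using ij by (simp add: scalar_prod_def)
    finally show "B $$ (i, j) = \<dots>" .
  qed (use B(1) in simp_all)
qed

lemma idempotent_similar_upper_triangular:
  fixes P :: "complex mat"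
  assumes P: "P \<in> carrier_mat n n" "P * P = P"
  obtains B S T where "similar_mat_wit P B S T" "upper_triangular B" "B * B = B"
    "\<forall>i<n. B $$ (i, i) = 0 \<or> B $$ (i, i) = 1"
    "mat_trace P = of_nat (card {i. i < n \<and> B $$ (i, i) = 1})"
proof -
  obtain es where "char_poly P = (\<Prod>a\<leftarrow>es. [:- a, 1:])"
    using char_poly_factorized[OF P(1)] by blast
  then obtain B where B: "B \<in> carrier_mat n n" "upper_triangular B" "similar_mat P B"
    using schur_decomposition_exists[OF P(1)] by blast
  then obtain S T where wit: "similar_mat_wit P B S T" unfolding similar_mat_def by blast
  note ST = similar_mat_witD2[OF P(1) wit]
  have "T * P * S = (T * S) * B * (T * S)"
    using ST(5-7) unfolding ST(3) by (simp add: assoc_mult_mat[of _ n n _ n _ n])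
  hence B_eq: "B = T * P * S" using ST(2,5) by simp
  have "B * B = T * P * (S * T) * P * S"
    using ST(4,6,7) unfolding B_eq by (simp add: assoc_mult_mat[of _ n n _ n _ n])
  also have "\<dots> = T * (P * P) * S"
    using ST(1,4,6,7) by (simp add: assoc_mult_mat[of _ n n _ n _ n])
  finally have idem: "B * B = B" using B_eq P(2) by simp
  have diag: "\<forall>i<n. B $$ (i, i) = 0 \<or> B $$ (i, i) = 1"
    using upper_triangular_idempotent_diag[OF B(1,2) idem] by blast
  have "mat_trace B = (\<Sum>i<n. if B $$ (i, i) = 1 then 1 else 0)"
    unfolding mat_trace_def using B(1) diag by (intro sum.cong) auto
  also have "\<dots> = of_nat (card {i. i < n \<and> B $$ (i, i) = 1})"
    by (simp add: sum.If_cases lessThan_def Collect_conj_eq Int_commute)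
  finally show ?thesis
    using that[OF wit B(2) idem diag] mat_trace_similar[OF wit] by simp
qed

lemma idempotent_trace_nat:
  fixes P :: "complex mat"
  assumes "P \<in> carrier_mat n n" "P * P = P"
  shows "\<exists>k\<le>n. mat_trace P = of_nat k"
proof -
  obtain B S T where "similar_mat_wit P B S T" "upper_triangular B" "B * B = B"
    "\<forall>i<n. B $$ (i, i) = 0 \<or> B $$ (i, i) = 1"
    "mat_trace P = of_nat (card {i. i < n \<and> B $$ (i, i) = 1})"
    by (rule idempotent_similar_upper_triangular[OF assms])
  moreover have "card {i. i < n \<and> B $$ (i, i) = 1} \<le> n"
    using card_mono[of "{..<n}" "{i. i < n \<and> B $$ (i, i) = 1}"] by auto
  ultimately show ?thesis by blast
qed

lemma idempotent_trace_zero: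
  fixes P :: "complex mat"
  assumes P: "P \<in> carrier_mat n n" "P * P = P" and "mat_trace P = 0"
  shows "P = 0\<^sub>m n n"
proof -
  obtain B S T where wit: "similar_mat_wit P B S T" and B: "upper_triangular B" "B * B = B"
    and diag: "\<forall>i<n. B $$ (i, i) = 0 \<or> B $$ (i, i) = 1"
    and tr: "mat_trace P = of_nat (card {i. i < n \<and> B $$ (i, i) = 1})"
    by (rule idempotent_similar_upper_triangular[OF P])
  note ST = similar_mat_witD2[OF P(1) wit]
  have "card {i. i < n \<and> B $$ (i, i) = 1} = 0" using tr assms(3) by simp
  hence diag0: "\<forall>i<n. B $$ (i, i) = 0" using diag by auto
  have "B = 0\<^sub>m n n"
  proof (rule eq_matI)
    fix i j assume "i < dim_row (0\<^sub>m n n :: complex mat)" "j < dim_col (0\<^sub>m n n :: complex mat)"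
    hence ij: "i < n" "j < n" by simp_all
    show "B $$ (i, j) = 0\<^sub>m n n $$ (i, j)"
    proof (cases "i \<le> j")
      case True
      thus ?thesis using upper_triangular_idempotent_zero[OF ST(5) B] diag0 ij by simp
    next
      case False
      thus ?thesis using ST(5) B(1) ij by (simp add: upper_triangularD)
    qed
  qed (use ST(5) in simp_all)
  hence "P = S * 0\<^sub>m n n * T" using ST(3) by simp
  also have "\<dots> = 0\<^sub>m n n" using ST(6,7) by simp
  finally show ?thesis .
qed

lemma idempotent_trace_one:
  fixes P :: "complex mat"
  assumes P: "P \<in> carrier_mat n n" "P * P = P" and tr: "mat_trace P = 1"
  obtains x y where "x \<in> carrier_mat n 1" "y \<in> carrier_mat 1 n" "P = x * y" "y * x = 1\<^sub>m 1"
proof -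
  obtain B S T where wit: "similar_mat_wit P B S T" and B: "upper_triangular B" "B * B = B"
    and diag: "\<forall>i<n. B $$ (i, i) = 0 \<or> B $$ (i, i) = 1"
    and trB: "mat_trace P = of_nat (card {i. i < n \<and> B $$ (i, i) = 1})"
    by (rule idempotent_similar_upper_triangular[OF P])
  note ST = similar_mat_witD2[OF P(1) wit]
  have "of_nat (card {i. i < n \<and> B $$ (i, i) = 1}) = (of_nat 1 :: complex)" using tr trB by simp
  hence "card {i. i < n \<and> B $$ (i, i) = 1} = 1" by (simp only: of_nat_eq_iff)
  then obtain k where k: "{i. i < n \<and> B $$ (i, i) = 1} = {k}" by (rule card_1_singletonE)
  have k_iff: "i < n \<and> B $$ (i, i) = 1 \<longleftrightarrow> i = k" for i
    using k unfolding set_eq_iff by simp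
  have "B $$ (i, i) = 0" if "i < n" "i \<noteq> k" for i using k_iff[of i] diag that by auto
  moreover have "k < n" using k_iff[of k] by simp
  ultimately have B_eq: "B = mat n 1 (\<lambda>(i, _). B $$ (i, k)) * mat 1 n (\<lambda>(_, j). B $$ (k, j))"
    by (rule upper_triangular_idempotent_rank_one[OF ST(5) B])
  define b where "b = mat n 1 (\<lambda>(i, _). B $$ (i, k))"
  define c where "c = mat 1 n (\<lambda>(_, j). B $$ (k, j))"
  have bc: "b \<in> carrier_mat n 1" "c \<in> carrier_mat 1 n" unfolding b_def c_def by simp_all
  define x where "x = S * b"
  define y where "y = c * T"
  have xy: "x \<in> carrier_mat n 1" "y \<in> carrier_mat 1 n" using ST(6,7) bc unfolding x_def y_def by auto
  have "P = S * (b * c) * T" using ST(3) B_eq unfolding b_def c_def by simp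
  also have "\<dots> = S * b * c * T" by (simp only: assoc_mult_mat[OF ST(6) bc])
  also have "\<dots> = x * y"
    unfolding x_def y_def by (rule assoc_mult_mat[OF mult_carrier_mat[OF ST(6) bc(1)] bc(2) ST(7)])
  finally have "P = x * y" .
  moreover have "y * x = 1\<^sub>m 1" using rank_one_trace[OF xy] tr \<open>P = x * y\<close> by simp
  ultimately show ?thesis using that[OF xy] by blast
qed

section \<open>Involutions\<close>

(* For an involution E, this is the projection onto its (-1)-eigenspace. *)
definition neg_eigenproj :: "nat \<Rightarrow> complex mat \<Rightarrow> complex mat" where
  "neg_eigenproj n E = (1 / 2) \<cdot>\<^sub>m (1\<^sub>m n - E)"

lemma neg_eigenproj_carrier [simp]: "E \<in> carrier_mat n n \<Longrightarrow> neg_eigenproj n E \<in> carrier_mat n n"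
  unfolding neg_eigenproj_def by (simp add: minus_carrier_mat)

lemma neg_eigenproj_mult:
  assumes E: "E \<in> carrier_mat n n" and F: "F \<in> carrier_mat n n"
  shows "neg_eigenproj n E * neg_eigenproj n F = (1 / 4) \<cdot>\<^sub>m (1\<^sub>m n - E - F + E * F)"
proof -
  have "neg_eigenproj n E * neg_eigenproj n F = (1 / 2 * (1 / 2)) \<cdot>\<^sub>m ((1\<^sub>m n - E) * (1\<^sub>m n - F))"
    unfolding neg_eigenproj_def using E F
    by (intro eq_matI) (auto simp: minus_carrier_mat scalar_prod_def sum_distrib_left mult_ac)
  thus ?thesis unfolding one_minus_mult_one_minus[OF E F] by simp
qed

lemma neg_eigenproj_idempotent:
  assumes "E \<in> carrier_mat n n" "E * E = 1\<^sub>m n"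
  shows "neg_eigenproj n E * neg_eigenproj n E = neg_eigenproj n E"
proof -
  have "neg_eigenproj n E * neg_eigenproj n E = (1 / 4) \<cdot>\<^sub>m (1\<^sub>m n - E - E + 1\<^sub>m n)"
    using neg_eigenproj_mult[OF assms(1,1)] assms(2) by simp
  also have "\<dots> = neg_eigenproj n E"
    unfolding neg_eigenproj_def using assms(1) by (intro eq_matI) auto
  finally show ?thesis .
qed

lemma neg_eigenproj_mult_comm:
  assumes "E \<in> carrier_mat n n" "F \<in> carrier_mat n n" "E * F = F * E"
  shows "neg_eigenproj n E * neg_eigenproj n F = neg_eigenproj n F * neg_eigenproj n E"
proof -
  have "1\<^sub>m n - E - F + E * F = 1\<^sub>m n - F - E + F * E"
    using assms by (intro eq_matI) auto
  thus ?thesis using neg_eigenproj_mult[OF assms(1,2)] neg_eigenproj_mult[OF assms(2,1)] by simp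
qed

lemma mat_trace_neg_eigenproj:
  assumes "E \<in> carrier_mat n n"
  shows "mat_trace (neg_eigenproj n E) = (of_nat n - mat_trace E) / 2"
  unfolding neg_eigenproj_def using assms
  by (simp add: mat_trace_smult[of _ n] mat_trace_minus[OF one_carrier_mat] minus_carrier_mat)

lemma mat_trace_neg_eigenproj_mult:
  assumes E: "E \<in> carrier_mat n n" and F: "F \<in> carrier_mat n n"
  shows "mat_trace (neg_eigenproj n E * neg_eigenproj n F)
    = (of_nat n - mat_trace E - mat_trace F + mat_trace (E * F)) / 4"
proof -
  have "mat_trace (1\<^sub>m n - E - F + E * F) = of_nat n - mat_trace E - mat_trace F + mat_trace (E * F)"
    using E F by (simp add: mat_trace_def sum.distrib sum_subtractf)
  thus ?thesis unfolding neg_eigenproj_mult[OF E F] using E F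
    by (simp add: mat_trace_smult[of _ n] minus_carrier_mat)
qed

lemma neg_eigenproj_conj:
  assumes S: "S \<in> carrier_mat n n" "S * S = 1\<^sub>m n" and E: "E \<in> carrier_mat n n"
  shows "neg_eigenproj n (S * E * S) = S * neg_eigenproj n E * S"
proof -
  have c: "1\<^sub>m n - E \<in> carrier_mat n n" using E by (simp add: minus_carrier_mat)
  have "S * (1\<^sub>m n - E) = S - S * E"
    using S E by (simp add: mult_minus_distrib_mat[OF S(1) one_carrier_mat E])
  hence "S * (1\<^sub>m n - E) * S = 1\<^sub>m n - S * E * S"
    using S E by (simp add: minus_mult_distrib_mat[of _ n n])
  moreover have "S * neg_eigenproj n E * S = (1 / 2) \<cdot>\<^sub>m (S * (1\<^sub>m n - E) * S)"
    unfolding neg_eigenproj_def mult_smult_distrib[OF S(1) c]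
    by (rule mult_smult_assoc_mat[OF mult_carrier_mat[OF S(1) c] S(1)])
  ultimately show ?thesis unfolding neg_eigenproj_def by simp
qed

lemma isometric_involution_adjoint:
  assumes H: "H \<in> carrier_mat n n" and E: "E \<in> carrier_mat n n" "E * E = 1\<^sub>m n"
    and isom: "mat_adjoint E * H * E = H"
  shows "mat_adjoint E * H = H * E"
proof -
  have EH: "mat_adjoint E * H \<in> carrier_mat n n"
    by (rule mult_carrier_mat[OF mat_adjoint_carrier[OF E(1)] H])
  have "mat_adjoint E * H = mat_adjoint E * H * (E * E)"
    unfolding E(2) right_mult_one_mat[OF EH] ..
  also have "\<dots> = (mat_adjoint E * H * E) * E"
    by (rule assoc_mult_mat[OF EH E(1) E(1), symmetric])
  finally show ?thesis unfolding isom .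
qed

lemma neg_eigenproj_selfadjoint:
  assumes H: "H \<in> carrier_mat n n" and E: "E \<in> carrier_mat n n" "E * E = 1\<^sub>m n"
    and isom: "mat_adjoint E * H * E = H"
  shows "mat_adjoint (neg_eigenproj n E) * H = H * neg_eigenproj n E"
proof -
  have c: "1\<^sub>m n - E \<in> carrier_mat n n" "1\<^sub>m n - mat_adjoint E \<in> carrier_mat n n"
    using E by (simp_all add: minus_carrier_mat)
  have "mat_adjoint (1\<^sub>m n - E) * H = H - mat_adjoint E * H"
    unfolding mat_adjoint_minus[OF one_carrier_mat E(1)] mat_adjoint_one
      minus_mult_distrib_mat[OF one_carrier_mat mat_adjoint_carrier[OF E(1)] H]
    using H by simp
  also have "\<dots> = H * (1\<^sub>m n - E)"
    unfolding isometric_involution_adjoint[OF assms] mult_minus_distrib_mat[OF H one_carrier_mat E(1)]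
    using H by simp
  finally have "mat_adjoint (1\<^sub>m n - E) * H = H * (1\<^sub>m n - E)" .
  thus ?thesis
    unfolding neg_eigenproj_def mat_adjoint_smult mat_adjoint_minus[OF one_carrier_mat E(1)]
      mat_adjoint_one mult_smult_assoc_mat[OF c(2) H] mult_smult_distrib[OF H c(1)]
    by simp
qed

lemma mat_trace_involution:
  fixes E :: "complex mat"
  assumes "E \<in> carrier_mat n n" "E * E = 1\<^sub>m n"
  shows "mat_trace E \<in> (\<lambda>k. of_nat n - 2 * of_nat k) ` {..n}"
proof -
  obtain k where "k \<le> n" "mat_trace (neg_eigenproj n E) = of_nat k"
    using idempotent_trace_nat[OF neg_eigenproj_carrier[OF assms(1)] neg_eigenproj_idempotent[OF assms]]
    by blast
  thus ?thesis using mat_trace_neg_eigenproj[OF assms(1)] by (auto simp: field_simps)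
qed

section \<open>Traces of involutions along homotopies\<close>

lemma topspace_mat_top [simp]: "topspace (mat_top n) = carrier_mat n n"
  unfolding mat_top_def topspace_pullback_topology by simp

lemma continuous_map_mat_top_index:
  assumes "i < n" "j < n"
  shows "continuous_map (mat_top n) euclidean (\<lambda>A. A $$ (i, j))"
proof -
  let ?entries = "\<lambda>A (ij :: nat \<times> nat). if fst ij < n \<and> snd ij < n then A $$ ij else (0 :: complex)"
  have "continuous_map (mat_top n) euclidean ((\<lambda>f. f (i, j)) \<circ> ?entries)"
    unfolding mat_top_def by (rule continuous_map_pullback) simp
  thus ?thesis using assms by (simp add: o_def)
qed

lemma continuous_map_mat_trace: "continuous_map (mat_top n) euclidean mat_trace"
proof (rule continuous_map_eq)
  show "continuous_map (mat_top n) euclidean (\<lambda>A. \<Sum>i<n. A $$ (i, i))"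
    by (intro continuous_map_sum continuous_map_mat_top_index) auto
qed (simp add: mat_trace_def)

lemma involution_trace_constant:
  assumes X: "connected_space X" and f: "continuous_map X (mat_top n) f"
    and invol: "\<And>x. x \<in> topspace X \<Longrightarrow> f x * f x = 1\<^sub>m n"
    and xy: "x \<in> topspace X" "y \<in> topspace X"
  shows "mat_trace (f x) = mat_trace (f y)"
proof -
  let ?g = "mat_trace \<circ> f"
  have "connected (?g ` topspace X)"
    using connectedin_continuous_map_image[OF continuous_map_compose[OF f continuous_map_mat_trace]] X
    by (simp add: connectedin_topspace)
  moreover have "?g ` topspace X \<subseteq> (\<lambda>k. of_nat n - 2 * of_nat k) ` {..n}"
  proof
    fix z assume "z \<in> ?g ` topspace X"
    then obtain x' where x': "x' \<in> topspace X" "z = mat_trace (f x')" by auto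
    have "f x' \<in> carrier_mat n n" using continuous_map_image_subset_topspace[OF f] x'(1) by auto
    thus "z \<in> (\<lambda>k. of_nat n - 2 * of_nat k) ` {..n}"
      using mat_trace_involution invol[OF x'(1)] x'(2) by blast
  qed
  hence "finite (?g ` topspace X)" by (rule finite_subset) simp
  ultimately have "?g ` topspace X = {} \<or> (\<exists>c. ?g ` topspace X = {c})"
    by (rule connected_finite_iff_sing[THEN iffD1])
  then obtain c where "?g ` topspace X = {c}" using xy(1) by blast
  hence "?g x = c" "?g y = c" using xy by blast+
  thus ?thesis by simp
qed

lemma homotopic_to_id_trace_involution:
  assumes "homotopic_to_id ro rm" and g: "g \<in> GLm n" "g * g = 1\<^sub>m n"
  shows "mat_trace (rm n g) = mat_trace g"
proof -
  obtain H :: "real \<Rightarrow> nat \<Rightarrow> complex mat \<Rightarrow> complex mat" where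
    H_functor: "\<forall>t\<in>{0..1}. GL_functor (H t)" and
    ends: "\<forall>n. \<forall>A\<in>GLm n. H 0 n A = rm n A \<and> H 1 n A = A" and
    cont: "continuous_map (prod_topology (top_of_set {0..1}) (subtopology (mat_top n) (GLm n)))
             (mat_top n) (\<lambda>(t, A). H t n A)"
    using assms(1) unfolding homotopic_to_id_def by blast
  have path: "continuous_map (top_of_set {0..1}) (mat_top n) (\<lambda>t. H t n g)"
  proof -
    have "continuous_map (top_of_set {0..1})
        (prod_topology (top_of_set {0..1}) (subtopology (mat_top n) (GLm n))) (\<lambda>t. (t, g))"
      using g by (intro continuous_map_pairedI) (auto simp: GLm_def)
    from continuous_map_compose[OF this cont] show ?thesis by (simp add: o_def)
  qed
  have "H t n g * H t n g = 1\<^sub>m n" if "t \<in> {0..1}" for t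
    using H_functor that g unfolding GL_functor_def by metis
  hence "mat_trace (H 0 n g) = mat_trace (H 1 n g)"
    by (intro involution_trace_constant[OF _ path]) (auto intro: connected_space_subtopology)
  thus ?thesis using ends g by simp
qed

section \<open>Coordinate reflections and transpositions\<close>

lemma mat_trace_mat_diag: "mat_trace (mat_diag n f) = (\<Sum>a<n. f a)"
  by (simp add: mat_trace_def mat_diag_def)

definition coord_reflection :: "nat \<Rightarrow> nat \<Rightarrow> complex mat" where
  "coord_reflection n i = mat_diag n (\<lambda>a. if a = i then -1 else 1)"

lemma coord_reflection_carrier [simp]: "coord_reflection n i \<in> carrier_mat n n"
  by (simp add: coord_reflection_def)

lemma dim_coord_reflection [simp]:
  "dim_row (coord_reflection n i) = n" "dim_col (coord_reflection n i) = n"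
  by (simp_all add: coord_reflection_def mat_diag_def)

lemma coord_reflection_involution: "coord_reflection n i * coord_reflection n i = 1\<^sub>m n"
  unfolding coord_reflection_def mat_diag_diag by (intro eq_matI) (auto simp: mat_diag_def)

lemma coord_reflection_mult_comm:
  "coord_reflection n i * coord_reflection n j = coord_reflection n j * coord_reflection n i"
  by (simp add: coord_reflection_def mult.commute)

lemma coord_reflection_mult_involution:
  "(coord_reflection n i * coord_reflection n j) * (coord_reflection n i * coord_reflection n j) = 1\<^sub>m n"
  unfolding coord_reflection_def mat_diag_diag by (intro eq_matI) (auto simp: mat_diag_def)

lemma mat_trace_coord_reflection:
  assumes "i < n"
  shows "mat_trace (coord_reflection n i) = of_nat n - 2"
proof -
  have "(\<Sum>a<n. if a = i then -1 else 1) = (\<Sum>a\<in>{..<n} - {i}. 1) + (-1 :: complex)"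
    using assms by (subst sum.remove[of _ i]) auto
  thus ?thesis using assms by (simp add: coord_reflection_def mat_trace_mat_diag)
qed

lemma mat_trace_coord_reflection_mult:
  assumes "i < n" "j < n" "i \<noteq> j"
  shows "mat_trace (coord_reflection n i * coord_reflection n j) = of_nat n - 4"
proof -
  have "mat_trace (coord_reflection n i * coord_reflection n j)
      = (\<Sum>a<n. if a \<in> {i, j} then -1 else 1)"
    unfolding coord_reflection_def mat_diag_diag mat_trace_mat_diag using assms
    by (intro sum.cong) auto
  also have "\<dots> = (\<Sum>a\<in>{..<n} - {i, j}. 1) + (\<Sum>a\<in>{i, j}. -1)"
    using assms by (subst sum.subset_diff[of "{i, j}"]) auto
  also have "\<dots> = of_nat n - 4"
    using assms by (simp add: card_Diff_subset)
  finally show ?thesis .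
qed

definition transposition_mat :: "nat \<Rightarrow> nat \<Rightarrow> nat \<Rightarrow> complex mat" where
  "transposition_mat n i j = mat n n (\<lambda>(a, b). if b = Transposition.transpose i j a then 1 else 0)"

lemma transposition_mat_carrier [simp]: "transposition_mat n i j \<in> carrier_mat n n"
  by (simp add: transposition_mat_def)

lemma dim_transposition_mat [simp]:
  "dim_row (transposition_mat n i j) = n" "dim_col (transposition_mat n i j) = n"
  by (simp_all add: transposition_mat_def)

lemma transpose_less:
  "i < n \<Longrightarrow> j < n \<Longrightarrow> a < n \<Longrightarrow> Transposition.transpose i j a < n"
  by (auto simp: Transposition.transpose_def)

lemma index_transposition_mat:
  assumes "a < n" "b < n"
  shows "transposition_mat n i j $$ (a, b) = (if b = Transposition.transpose i j a then 1 else 0)"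
    "transposition_mat n i j $$ (a, b) = (if a = Transposition.transpose i j b then 1 else 0)"
  using assms by (auto simp: transposition_mat_def Transposition.transpose_eq_iff)

lemma transposition_mat_mult_left:
  assumes "A \<in> carrier_mat n m" "i < n" "j < n" "a < n" "b < m"
  shows "(transposition_mat n i j * A) $$ (a, b) = A $$ (Transposition.transpose i j a, b)"
proof -
  have "(transposition_mat n i j * A) $$ (a, b)
      = (\<Sum>l\<in>{0..<n}. transposition_mat n i j $$ (a, l) * A $$ (l, b))"
    using assms by (simp add: scalar_prod_def)
  also have "\<dots> = (\<Sum>l\<in>{0..<n}. if l = Transposition.transpose i j a then A $$ (l, b) else 0)"
    using assms(4) by (intro sum.cong) (auto simp: index_transposition_mat(1))
  also have "\<dots> = A $$ (Transposition.transpose i j a, b)"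
    using transpose_less[OF assms(2-4)] by simp
  finally show ?thesis .
qed

lemma transposition_mat_mult_right:
  assumes "A \<in> carrier_mat m n" "i < n" "j < n" "a < m" "b < n"
  shows "(A * transposition_mat n i j) $$ (a, b) = A $$ (a, Transposition.transpose i j b)"
proof -
  have "(A * transposition_mat n i j) $$ (a, b)
      = (\<Sum>l\<in>{0..<n}. A $$ (a, l) * transposition_mat n i j $$ (l, b))"
    using assms by (simp add: scalar_prod_def)
  also have "\<dots> = (\<Sum>l\<in>{0..<n}. if l = Transposition.transpose i j b then A $$ (a, l) else 0)"
    using assms(5) by (intro sum.cong) (auto simp: index_transposition_mat(2))
  also have "\<dots> = A $$ (a, Transposition.transpose i j b)"
    using transpose_less[OF assms(2,3,5)] by simp
  finally show ?thesis .
qed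

lemma transposition_mat_involution:
  assumes "i < n" "j < n"
  shows "transposition_mat n i j * transposition_mat n i j = 1\<^sub>m n"
proof (rule eq_matI)
  fix a b assume "a < dim_row (1\<^sub>m n :: complex mat)" "b < dim_col (1\<^sub>m n :: complex mat)"
  hence ab: "a < n" "b < n" by simp_all
  show "(transposition_mat n i j * transposition_mat n i j) $$ (a, b) = 1\<^sub>m n $$ (a, b)"
    using assms ab transpose_less[OF assms ab(1)]
    by (subst transposition_mat_mult_left) (auto simp: index_transposition_mat(1))
qed simp_all

lemma transposition_mat_conj_coord_reflection:
  assumes "i < n" "j < n"
  shows "transposition_mat n i j * coord_reflection n i * transposition_mat n i j = coord_reflection n j"
proof (rule eq_matI)
  fix a b assume "a < dim_row (coord_reflection n j)" "b < dim_col (coord_reflection n j)"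
  hence ab: "a < n" "b < n" by simp_all
  have "(transposition_mat n i j * coord_reflection n i * transposition_mat n i j) $$ (a, b)
      = (transposition_mat n i j * coord_reflection n i) $$ (a, Transposition.transpose i j b)"
    by (rule transposition_mat_mult_right[OF mult_carrier_mat[OF transposition_mat_carrier
      coord_reflection_carrier] assms ab])
  also have "\<dots> = coord_reflection n i $$ (Transposition.transpose i j a, Transposition.transpose i j b)"
    by (rule transposition_mat_mult_left[OF _ assms ab(1) transpose_less[OF assms ab(2)]]) simp
  also have "\<dots> = coord_reflection n j $$ (a, b)"
    using assms ab transpose_less[OF assms ab(1)] transpose_less[OF assms ab(2)]
    by (auto simp: coord_reflection_def mat_diag_def Transposition.transpose_eq_iff)
  finally show "(transposition_mat n i j * coord_reflection n i * transposition_mat n i j) $$ (a, b)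
      = coord_reflection n j $$ (a, b)" .
qed simp_all

section \<open>Hermitian forms\<close>

lemma scaled_cnj_sum_mult_sum:
  "c * (cnj (\<Sum>i\<in>A. a i) * (\<Sum>j\<in>B. b j)) = (\<Sum>i\<in>A. \<Sum>j\<in>B. c * (cnj (a i) * b j))"
proof -
  have "c * (cnj (\<Sum>i\<in>A. a i) * (\<Sum>j\<in>B. b j)) = c * (\<Sum>i\<in>A. \<Sum>j\<in>B. cnj (a i) * b j)"
    by (simp only: cnj_sum sum_product)
  thus ?thesis by (simp only: sum_distrib_left)
qed

lemma sum_scaled_cnj_mult_self:
  "(\<Sum>k\<in>A. complex_of_real r * (cnj (u k) * u k)) = complex_of_real (r * (\<Sum>k\<in>A. (cmod (u k))\<^sup>2))"
proof -
  have "cnj z * z = complex_of_real ((cmod z)\<^sup>2)" for z by (metis complex_norm_square mult.commute)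
  thus ?thesis by (simp add: sum_distrib_left)
qed

lemma quadratic_form_scaled_gram:
  fixes Y :: "complex mat" and r :: real
  assumes Y: "Y \<in> carrier_mat n n"
  shows "(\<Sum>i<n. \<Sum>j<n. cnj (v i) * (complex_of_real r \<cdot>\<^sub>m (mat_adjoint Y * Y)) $$ (i, j) * v j)
    = complex_of_real (r * (\<Sum>k<n. (cmod (\<Sum>j<n. Y $$ (k, j) * v j))\<^sup>2))"
proof -
  have "(\<Sum>i<n. \<Sum>j<n. cnj (v i) * (complex_of_real r \<cdot>\<^sub>m (mat_adjoint Y * Y)) $$ (i, j) * v j)
      = (\<Sum>i<n. \<Sum>j<n. \<Sum>k<n. r * (cnj (Y $$ (k, i) * v i) * (Y $$ (k, j) * v j)))"
  proof (intro sum.cong refl)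
    fix i j assume "i \<in> {..<n}" "j \<in> {..<n}"
    hence "(complex_of_real r \<cdot>\<^sub>m (mat_adjoint Y * Y)) $$ (i, j)
        = (\<Sum>k<n. r * (cnj (Y $$ (k, i)) * Y $$ (k, j)))"
      using Y by (simp add: scalar_prod_def atLeast0LessThan sum_distrib_left)
    thus "cnj (v i) * (complex_of_real r \<cdot>\<^sub>m (mat_adjoint Y * Y)) $$ (i, j) * v j
        = (\<Sum>k<n. r * (cnj (Y $$ (k, i) * v i) * (Y $$ (k, j) * v j)))"
      by (simp add: sum_distrib_left sum_distrib_right mult_ac)
  qed
  also have "\<dots> = (\<Sum>i<n. \<Sum>k<n. \<Sum>j<n. r * (cnj (Y $$ (k, i) * v i) * (Y $$ (k, j) * v j)))"
    by (rule sum.cong[OF refl sum.swap])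
  also have "\<dots> = (\<Sum>k<n. \<Sum>i<n. \<Sum>j<n. r * (cnj (Y $$ (k, i) * v i) * (Y $$ (k, j) * v j)))"
    by (rule sum.swap)
  also have "\<dots> = (\<Sum>k<n. r * (cnj (\<Sum>j<n. Y $$ (k, j) * v j) * (\<Sum>j<n. Y $$ (k, j) * v j)))"
    by (rule sum.cong[OF refl scaled_cnj_sum_mult_sum[symmetric]])
  also have "\<dots> = complex_of_real (r * (\<Sum>k<n. (cmod (\<Sum>j<n. Y $$ (k, j) * v j))\<^sup>2))"
    by (rule sum_scaled_cnj_mult_self)
  finally show ?thesis .
qed

lemma sum_norm_mult_vec_pos:
  fixes Y :: "complex mat"
  assumes Y: "Y \<in> carrier_mat n n" "det Y \<noteq> 0" and v: "\<exists>i<n. v i \<noteq> 0"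
  shows "0 < (\<Sum>k<n. (cmod (\<Sum>j<n. Y $$ (k, j) * v j))\<^sup>2)"
proof -
  have "vec n v \<noteq> 0\<^sub>v n" using v by (auto simp: vec_eq_iff)
  hence "Y *\<^sub>v vec n v \<noteq> 0\<^sub>v n"
    using det_0_iff_vec_prod_zero[OF Y(1)] vec_carrier[of n v] Y(2) by blast
  then obtain k where k: "k < n" "(\<Sum>j<n. Y $$ (k, j) * v j) \<noteq> 0"
    using Y(1) by (auto simp: vec_eq_iff scalar_prod_def atLeast0LessThan)
  have "0 < (cmod (\<Sum>j<n. Y $$ (k, j) * v j))\<^sup>2" using k by simp
  also have "\<dots> \<le> (\<Sum>k<n. (cmod (\<Sum>j<n. Y $$ (k, j) * v j))\<^sup>2)" using k by (intro member_le_sum) auto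
  finally show ?thesis .
qed

lemma definite_obj_scaled_gram:
  fixes Y :: "complex mat" and r :: real
  assumes Y: "Y \<in> carrier_mat n n" and H: "H = complex_of_real r \<cdot>\<^sub>m (mat_adjoint Y * Y)"
    and det: "det H \<noteq> 0"
  shows "definite_obj (n, H)"
proof (cases "n = 0")
  case True
  thus ?thesis by (simp add: definite_obj_def)
next
  case False
  have "det H = complex_of_real r ^ n * (det (mat_adjoint Y) * det Y)"
    using Y unfolding H by (simp add: det_mult[of _ n])
  hence "r \<noteq> 0" "det Y \<noteq> 0" using det False by auto
  note pos = sum_norm_mult_vec_pos[OF Y this(2)]
  consider "0 < r" | "r < 0" using \<open>r \<noteq> 0\<close> by linarith
  thus ?thesis
    unfolding definite_obj_def fst_conv snd_conv H quadratic_form_scaled_gram[OF Y]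
    by cases (simp_all add: pos mult_neg_pos)
qed

lemma scaled_gram_of_dual_bases:
  fixes H :: "complex mat" and u w :: "nat \<Rightarrow> complex mat"
  assumes H: "H \<in> carrier_mat n n"
    and u: "\<And>i. i < n \<Longrightarrow> u i \<in> carrier_mat n 1" and w: "\<And>i. i < n \<Longrightarrow> w i \<in> carrier_mat 1 n"
    and dual: "\<And>i j. i < n \<Longrightarrow> j < n \<Longrightarrow> w i * u j = (if i = j then 1\<^sub>m 1 else 0\<^sub>m 1 1)"
    and Hu: "\<And>i. i < n \<Longrightarrow> H * u i = c \<cdot>\<^sub>m mat_adjoint (w i)"
  shows "\<exists>W \<in> carrier_mat n n. H = c \<cdot>\<^sub>m (mat_adjoint W * W)"
proof -
  define U where "U = mat n n (\<lambda>(a, i). u i $$ (a, 0))"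
  define W where "W = mat n n (\<lambda>(i, b). w i $$ (0, b))"
  have UW_carrier: "U \<in> carrier_mat n n" "W \<in> carrier_mat n n" unfolding U_def W_def by simp_all
  have "W * U = 1\<^sub>m n"
  proof (rule eq_matI)
    fix i j assume "i < dim_row (1\<^sub>m n :: complex mat)" "j < dim_col (1\<^sub>m n :: complex mat)"
    hence ij: "i < n" "j < n" by simp_all
    have "(W * U) $$ (i, j) = (\<Sum>l<n. w i $$ (0, l) * u j $$ (l, 0))"
      using ij by (simp add: U_def W_def scalar_prod_def atLeast0LessThan)
    also have "\<dots> = (w i * u j) $$ (0, 0)"
      using ij u[OF ij(2)] w[OF ij(1)] by (simp add: scalar_prod_def atLeast0LessThan)
    finally show "(W * U) $$ (i, j) = 1\<^sub>m n $$ (i, j)" using ij dual by simp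
  qed (use UW_carrier in simp_all)
  hence UW: "U * W = 1\<^sub>m n" using mat_mult_left_right_inverse UW_carrier by blast
  have HU: "H * U = c \<cdot>\<^sub>m mat_adjoint W"
  proof (rule eq_matI)
    fix a i assume "a < dim_row (c \<cdot>\<^sub>m mat_adjoint W)" "i < dim_col (c \<cdot>\<^sub>m mat_adjoint W)"
    hence ai: "a < n" "i < n" using UW_carrier by simp_all
    have "(H * U) $$ (a, i) = (H * u i) $$ (a, 0)"
      using ai H u[OF ai(2)] by (simp add: U_def scalar_prod_def atLeast0LessThan)
    thus "(H * U) $$ (a, i) = (c \<cdot>\<^sub>m mat_adjoint W) $$ (a, i)"
      using ai Hu[OF ai(2)] w[OF ai(2)] by (simp add: W_def)
  qed (use H UW_carrier in simp_all)
  have "H = H * (U * W)" using H UW by simp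
  also have "\<dots> = c \<cdot>\<^sub>m (mat_adjoint W * W)"
    using H UW_carrier by (simp add: HU mult_smult_assoc_mat[of _ n n] flip: assoc_mult_mat[of _ n n _ n _ n])
  finally show ?thesis using UW_carrier by blast
qed

lemma selfadjoint_rank_one_mult:
  fixes H x y :: "complex mat"
  assumes H: "H \<in> carrier_mat n n" and x: "x \<in> carrier_mat n 1" and y: "y \<in> carrier_mat 1 n"
    and yx: "y * x = 1\<^sub>m 1" and selfadj: "mat_adjoint (x * y) * H = H * (x * y)"
  shows "H * x = mat_adjoint y * (mat_adjoint x * H * x)"
proof -
  have "H * x = H * (x * (y * x))"
    using x by (simp add: yx)
  also have "\<dots> = H * (x * y) * x"
    by (simp only: assoc_mult_mat[OF H mult_carrier_mat[OF x y] x] assoc_mult_mat[OF x y x])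
  also have "\<dots> = mat_adjoint y * mat_adjoint x * H * x"
    unfolding selfadj[symmetric] mat_adjoint_mult[OF x y] ..
  also have "\<dots> = mat_adjoint y * (mat_adjoint x * H * x)"
    using assoc_mult_mat[OF mat_adjoint_carrier[OF y] mat_adjoint_carrier[OF x] H]
      assoc_mult_mat[OF mat_adjoint_carrier[OF y] mult_carrier_mat[OF mat_adjoint_carrier[OF x] H] x]
    by simp
  finally show ?thesis .
qed

lemma hermitian_form_real:
  fixes H x :: "complex mat"
  assumes H: "H \<in> carrier_mat n n" "mat_adjoint H = H" and x: "x \<in> carrier_mat n 1"
  shows "(mat_adjoint x * H * x) $$ (0, 0) \<in> \<real>"
proof -
  let ?C = "mat_adjoint x * H * x"
  have xH: "mat_adjoint x * H \<in> carrier_mat 1 n" using mult_carrier_mat[OF mat_adjoint_carrier[OF x] H(1)] .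
  have "mat_adjoint ?C = mat_adjoint x * (H * x)"
    unfolding mat_adjoint_mult[OF xH x] mat_adjoint_mult[OF mat_adjoint_carrier[OF x] H(1)] H(2)
    by simp
  also have "\<dots> = ?C" by (rule assoc_mult_mat[OF mat_adjoint_carrier[OF x] H(1) x, symmetric])
  finally have "mat_adjoint ?C = ?C" .
  hence "cnj (?C $$ (0, 0)) = ?C $$ (0, 0)" using xH x index_mat_adjoint[of 0 ?C 0] by simp
  thus ?thesis by (simp add: Reals_cnj_iff)
qed

(* The columns S i * x and the rows y * S i are dual bases, and H maps S i * x to a fixed real
   multiple of the adjoint of y * S i; hence H is a real multiple of a Gram matrix. *)
lemma definite_obj_of_isometric_frame:
  fixes H x y :: "complex mat" and S :: "nat \<Rightarrow> complex mat"
  assumes H: "H \<in> carrier_mat n n" "mat_adjoint H = H" "det H \<noteq> 0"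
    and x: "x \<in> carrier_mat n 1" and y: "y \<in> carrier_mat 1 n" and yx: "y * x = 1\<^sub>m 1"
    and selfadj: "mat_adjoint (x * y) * H = H * (x * y)"
    and S: "\<And>i. i < n \<Longrightarrow> S i \<in> carrier_mat n n"
    and S_invol: "\<And>i. i < n \<Longrightarrow> S i * S i = 1\<^sub>m n"
    and S_isom: "\<And>i. i < n \<Longrightarrow> mat_adjoint (S i) * H * S i = H"
    and frame: "\<And>i j. i < n \<Longrightarrow> j < n \<Longrightarrow> i \<noteq> j \<Longrightarrow> y * S i * (S j * x) = 0\<^sub>m 1 1"
  shows "definite_obj (n, H)"
proof -
  define C where "C = mat_adjoint x * H * x"
  have C: "C \<in> carrier_mat 1 1"
    unfolding C_def by (rule mult_carrier_mat[OF mult_carrier_mat[OF mat_adjoint_carrier[OF x] H(1)] x])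
  have C_real: "C $$ (0, 0) = complex_of_real (Re (C $$ (0, 0)))"
    unfolding C_def using hermitian_form_real[OF H(1,2) x] by (simp add: of_real_Re)
  have Hx: "H * x = mat_adjoint y * C"
    unfolding C_def by (rule selfadjoint_rank_one_mult[OF H(1) x y yx selfadj])
  have "\<exists>W \<in> carrier_mat n n. H = C $$ (0, 0) \<cdot>\<^sub>m (mat_adjoint W * W)"
  proof (rule scaled_gram_of_dual_bases[OF H(1)])
    fix i assume i: "i < n"
    show "S i * x \<in> carrier_mat n 1" "y * S i \<in> carrier_mat 1 n" using S[OF i] x y by auto
    have "H * (S i * x) = mat_adjoint (S i) * H * x"
      using H S[OF i] x isometric_involution_adjoint[OF H(1) S[OF i] S_invol[OF i] S_isom[OF i]]
      by (simp flip: assoc_mult_mat)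
    also have "\<dots> = mat_adjoint (S i) * (mat_adjoint y * C)"
      using assoc_mult_mat[OF mat_adjoint_carrier[OF S[OF i]] H(1) x] Hx by simp
    also have "\<dots> = mat_adjoint (y * S i) * C"
      unfolding mat_adjoint_mult[OF y S[OF i]]
      using assoc_mult_mat[OF mat_adjoint_carrier[OF S[OF i]] mat_adjoint_carrier[OF y] C] by simp
    also have "\<dots> = C $$ (0, 0) \<cdot>\<^sub>m mat_adjoint (y * S i)"
      using S[OF i] y C by (intro mult_one_by_one_mat) auto
    finally show "H * (S i * x) = C $$ (0, 0) \<cdot>\<^sub>m mat_adjoint (y * S i)" .
  next
    fix i j assume ij: "i < n" "j < n"
    show "y * S i * (S j * x) = (if i = j then 1\<^sub>m 1 else 0\<^sub>m 1 1)"
      using frame[OF ij] mult_involution_sandwich[OF y S[OF ij(1)] S_invol[OF ij(1)] x] yx by auto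
  qed
  then obtain W where "W \<in> carrier_mat n n" "H = complex_of_real (Re (C $$ (0, 0))) \<cdot>\<^sub>m (mat_adjoint W * W)"
    using C_real by auto
  thus ?thesis using definite_obj_scaled_gram H(3) by blast
qed

section \<open>Trace-preserving isometric representations of \<open>GL\<^sub>n\<close>\<close>

locale trace_preserving_isometric_rep =
  fixes n :: nat and H :: "complex mat" and R :: "complex mat \<Rightarrow> complex mat"
  assumes herm: "herm_obj (n, H)"
    and R_isom: "A \<in> GLm n \<Longrightarrow> R A \<in> Isom (n, H)"
    and R_mult: "A \<in> GLm n \<Longrightarrow> B \<in> GLm n \<Longrightarrow> R (A * B) = R A * R B"
    and R_one: "R (1\<^sub>m n) = 1\<^sub>m n"
    and R_trace: "g \<in> GLm n \<Longrightarrow> g * g = 1\<^sub>m n \<Longrightarrow> mat_trace (R g) = mat_trace g"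
begin

lemma H_nondegenerate_hermitian: "H \<in> carrier_mat n n" "mat_adjoint H = H" "det H \<noteq> 0"
  using herm by (simp_all add: herm_obj_def)

lemma R_carrier: "A \<in> GLm n \<Longrightarrow> R A \<in> carrier_mat n n"
  and R_isometry: "A \<in> GLm n \<Longrightarrow> mat_adjoint (R A) * H * R A = H"
  using R_isom by (simp_all add: Isom_def)

lemma R_involution:
  assumes "A \<in> carrier_mat n n" "A * A = 1\<^sub>m n"
  shows "R A * R A = 1\<^sub>m n"
proof -
  have "R A * R A = R (A * A)" by (rule R_mult[OF involution_GLm[OF assms] involution_GLm[OF assms], symmetric])
  thus ?thesis using assms(2) R_one by simp
qed

definition E :: "nat \<Rightarrow> complex mat" where "E i = R (coord_reflection n i)"

definition S :: "nat \<Rightarrow> complex mat" where "S i = R (transposition_mat n 0 i)"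

definition P :: "nat \<Rightarrow> complex mat" where "P i = neg_eigenproj n (E i)"

lemma coord_reflection_GLm: "coord_reflection n i \<in> GLm n"
  by (rule involution_GLm[OF coord_reflection_carrier coord_reflection_involution])

lemma E_carrier: "E i \<in> carrier_mat n n"
  unfolding E_def by (rule R_carrier[OF coord_reflection_GLm])

lemma E_involution: "E i * E i = 1\<^sub>m n"
  unfolding E_def by (rule R_involution[OF coord_reflection_carrier coord_reflection_involution])

lemma E_isometry: "mat_adjoint (E i) * H * E i = H"
  unfolding E_def by (rule R_isometry[OF coord_reflection_GLm])

lemma E_mult: "E i * E j = R (coord_reflection n i * coord_reflection n j)"
  unfolding E_def by (rule R_mult[OF coord_reflection_GLm coord_reflection_GLm, symmetric])

lemma E_mult_comm: "E i * E j = E j * E i"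
  unfolding E_mult coord_reflection_mult_comm ..

lemma mat_trace_E: "i < n \<Longrightarrow> mat_trace (E i) = of_nat n - 2"
  unfolding E_def R_trace[OF coord_reflection_GLm coord_reflection_involution]
  by (rule mat_trace_coord_reflection)

lemma mat_trace_E_mult: "i < n \<Longrightarrow> j < n \<Longrightarrow> i \<noteq> j \<Longrightarrow> mat_trace (E i * E j) = of_nat n - 4"
  unfolding E_mult R_trace[OF involution_GLm[OF mult_carrier_mat[OF coord_reflection_carrier
      coord_reflection_carrier] coord_reflection_mult_involution] coord_reflection_mult_involution]
  by (rule mat_trace_coord_reflection_mult)

lemma transposition_mat_zero_involution: "i < n \<Longrightarrow> transposition_mat n 0 i * transposition_mat n 0 i = 1\<^sub>m n"
  by (rule transposition_mat_involution) simp_all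

lemma transposition_mat_GLm: "i < n \<Longrightarrow> transposition_mat n 0 i \<in> GLm n"
  by (rule involution_GLm[OF transposition_mat_carrier transposition_mat_zero_involution])

lemma S_carrier: "i < n \<Longrightarrow> S i \<in> carrier_mat n n"
  unfolding S_def by (rule R_carrier[OF transposition_mat_GLm])

lemma S_involution: "i < n \<Longrightarrow> S i * S i = 1\<^sub>m n"
  unfolding S_def by (rule R_involution[OF transposition_mat_carrier transposition_mat_zero_involution])

lemma S_isometry: "i < n \<Longrightarrow> mat_adjoint (S i) * H * S i = H"
  unfolding S_def by (rule R_isometry[OF transposition_mat_GLm])

lemma E_conj:
  assumes i: "i < n"
  shows "E i = S i * E 0 * S i"
proof -
  have n0: "0 < n" using i by simp
  have TR: "transposition_mat n 0 i * coord_reflection n 0 \<in> GLm n"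
    by (rule mult_involutions_GLm[OF transposition_mat_carrier transposition_mat_zero_involution[OF i]
        coord_reflection_carrier coord_reflection_involution])
  have "E i = R (transposition_mat n 0 i * coord_reflection n 0 * transposition_mat n 0 i)"
    by (simp only: E_def transposition_mat_conj_coord_reflection[OF n0 i])
  also have "\<dots> = R (transposition_mat n 0 i * coord_reflection n 0) * S i"
    unfolding S_def by (rule R_mult[OF TR transposition_mat_GLm[OF i]])
  also have "\<dots> = S i * E 0 * S i"
    unfolding S_def E_def by (simp only: R_mult[OF transposition_mat_GLm[OF i] coord_reflection_GLm])
  finally show ?thesis .
qed

lemma P_carrier: "P i \<in> carrier_mat n n"
  unfolding P_def by (rule neg_eigenproj_carrier[OF E_carrier])

lemma P_idempotent: "P i * P i = P i"
  unfolding P_def by (rule neg_eigenproj_idempotent[OF E_carrier E_involution])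

lemma mat_trace_P: "i < n \<Longrightarrow> mat_trace (P i) = 1"
  unfolding P_def mat_trace_neg_eigenproj[OF E_carrier] by (simp add: mat_trace_E)

lemma P_conj: "i < n \<Longrightarrow> P i = S i * P 0 * S i"
  unfolding P_def by (subst E_conj) (simp_all add: neg_eigenproj_conj S_carrier S_involution E_carrier)

lemma P_selfadjoint: "mat_adjoint (P i) * H = H * P i"
  unfolding P_def by (rule neg_eigenproj_selfadjoint[OF H_nondegenerate_hermitian(1) E_carrier E_involution E_isometry])

lemma P_mult_eq_zero:
  assumes "i < n" "j < n" "i \<noteq> j"
  shows "P i * P j = 0\<^sub>m n n"
proof (rule idempotent_trace_zero)
  show "P i * P j \<in> carrier_mat n n" by (rule mult_carrier_mat[OF P_carrier P_carrier])
  show "P i * P j * (P i * P j) = P i * P j"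
    by (rule idempotent_mult_comm[OF P_carrier P_carrier P_idempotent P_idempotent])
      (unfold P_def, rule neg_eigenproj_mult_comm[OF E_carrier E_carrier E_mult_comm])
  show "mat_trace (P i * P j) = 0"
    unfolding P_def using assms
    by (simp add: mat_trace_neg_eigenproj_mult[OF E_carrier E_carrier] mat_trace_E mat_trace_E_mult)
qed

theorem definite: "definite_obj (n, H)"
proof (cases "n = 0")
  case True
  thus ?thesis by (simp add: definite_obj_def)
next
  case False
  hence n0: "0 < n" by simp
  obtain x y where x: "x \<in> carrier_mat n 1" and y: "y \<in> carrier_mat 1 n"
    and P0: "P 0 = x * y" and yx: "y * x = 1\<^sub>m 1"
    by (rule idempotent_trace_one[OF P_carrier P_idempotent mat_trace_P[OF n0]])
  have P_rank_one: "P i = (S i * x) * (y * S i)" if i: "i < n" for i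
  proof -
    have "P i = S i * (x * y) * S i" unfolding P0[symmetric] by (rule P_conj[OF i])
    thus ?thesis
      by (simp only: assoc_mult_mat[OF S_carrier[OF i] x y, symmetric]
          assoc_mult_mat[OF mult_carrier_mat[OF S_carrier[OF i] x] y S_carrier[OF i]])
  qed
  have unit: "(y * S i) * (S i * x) = 1\<^sub>m 1" if i: "i < n" for i
    using mult_involution_sandwich[OF y S_carrier[OF i] S_involution[OF i] x] yx by simp
  show ?thesis
  proof (rule definite_obj_of_isometric_frame[OF H_nondegenerate_hermitian x y yx _ S_carrier S_involution S_isometry])
    show "mat_adjoint (x * y) * H = H * (x * y)" using P_selfadjoint[of 0] unfolding P0 .
    fix i j assume ij: "i < n" "j < n" "i \<noteq> j"
    have "(S i * x) * (y * S i) * ((S j * x) * (y * S j)) = 0\<^sub>m n n"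
      using P_mult_eq_zero[OF ij] unfolding P_rank_one[OF ij(1)] P_rank_one[OF ij(2)] .
    thus "y * S i * (S j * x) = 0\<^sub>m 1 1"
      by (rule rank_one_mult_eq_zero[OF mult_carrier_mat[OF S_carrier[OF ij(1)] x]
          mult_carrier_mat[OF S_carrier[OF ij(2)] x] mult_carrier_mat[OF y S_carrier[OF ij(1)]]
          mult_carrier_mat[OF y S_carrier[OF ij(2)]] unit[OF ij(1)] unit[OF ij(2)]])
  qed
qed

end

theorem lemma7p1:
  fixes ro :: "nat \<Rightarrow> nat \<times> complex mat"
    and rm :: "nat \<Rightarrow> complex mat \<Rightarrow> complex mat"
  assumes "herm_functor ro rm"
    and "homotopic_to_id ro rm"
    and "\<forall>n. homotopy_equivalence_map (subtopology (mat_top n) (GLm n))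
               (subtopology (mat_top (fst (ro n))) (Isom (ro n))) (rm n)"
  shows "\<forall>n. definite_obj (ro n)"
proof
  fix n
  have ro: "ro n = (n, snd (ro n))"
    using assms(2) unfolding homotopic_to_id_def by (metis prod.collapse)
  interpret trace_preserving_isometric_rep n "snd (ro n)" "rm n"
  proof
    show "herm_obj (n, snd (ro n))" "rm n (1\<^sub>m n) = 1\<^sub>m n"
      using assms(1) ro unfolding herm_functor_def by (metis fst_conv)+
    show "A \<in> GLm n \<Longrightarrow> rm n A \<in> Isom (n, snd (ro n))" for A
      using assms(1) ro unfolding herm_functor_def by metis
    show "A \<in> GLm n \<Longrightarrow> B \<in> GLm n \<Longrightarrow> rm n (A * B) = rm n A * rm n B" for A B
      using assms(1) unfolding herm_functor_def by blast
    show "g \<in> GLm n \<Longrightarrow> g * g = 1\<^sub>m n \<Longrightarrow> mat_trace (rm n g) = mat_trace g" for g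
      by (rule homotopic_to_id_trace_involution[OF assms(2)])
  qed
  show "definite_obj (ro n)" using definite ro by simp
qed

end
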